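(* Let $p$ be an odd prime, let $v$ be an integer with $1<v<p-1$, let $g\in\{2,\dots,p-1\}$ be a primitive root modulo $p$, let $t\ge1$ and $b\in\{0,\dots,v-1\}$. Let $$\rho(b,t)=\#\{i\in[1,p-1]:\ g^i\,\%\,p\not\equiv b,\ g^{i+t+1}\,\%\,p\not\equiv b,\ g^{i+j}\,\%\,p\equiv b\ (1\le j\le t)\},$$ all congruences modulo $v$. Write $p=q\,g^{t+1}+r$ with $0\le r<g^{t+1}$. Then $$(v-1)\left\lfloor\frac{g}{v}\right\rfloor^{t}\left\lfloor\frac{(v-1)g}{v}\right\rfloor\left\lfloor\frac{q}{v}\right\rfloor\ \le\ \rho(b,t)\ \le\ (v-1)\left\lceil\frac{g}{v}\right\rceil^{t}\left\lceil\frac{(v-1)g}{v}\right\rceil\left\lceil\frac{q+1}{v}\right\rceil.$$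
   Context: $x\,\%\,p$ denotes the least nonnegative remainder of the integer $x$ modulo $p$. *)

theory Defs
  imports "HOL-Number_Theory.Number_Theory"
begin

definition rho :: "nat \<Rightarrow> nat \<Rightarrow> nat \<Rightarrow> nat \<Rightarrow> nat \<Rightarrow> nat" where
  "rho p g v b t = card {i \<in> {1..p-1}.
      \<not> [g ^ i mod p = b] (mod v) \<and>
      \<not> [g ^ (i + t + 1) mod p = b] (mod v) \<and>
      (\<forall>j \<in> {1..t}. [g ^ (i + j) mod p = b] (mod v))}"

end

theory Submission
  imports Defs
begin

text \<open>
  Since g is a primitive root, i \<mapsto> g^i mod p permutes [1, p-1], so \<rho>(b,t) counts the u < p
  such that, modulo v, u is not congruent to b, g^j u mod p is congruent to b for 1 \<le> j \<le> t, and
  g^(t+1) u mod p is not. Put G = g^(t+1) and D = \<lfloor>G u / p\<rfloor>. Then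
  g^j u mod p = g^j u - p \<lfloor>D / g^(t+1-j)\<rfloor>, so modulo v the condition depends only on
  a = u mod v and on the t+1 base-g digits d_1, ..., d_(t+1) of D: it says that the walk
  y_0 = a, y_j = g y_(j-1) - p d_j stays in the class of b for t steps and then leaves it.
  As p is invertible mod v, at every step between \<lfloor>g/v\<rfloor> and \<lceil>g/v\<rceil> digits stay and the
  other ones leave, which bounds the number of admissible pairs (a, D). Finally, the u with a
  given D form an interval of length q or q+1, which meets the class of a in between \<lfloor>q/v\<rfloor>
  and \<lceil>(q+1)/v\<rceil> points.
\<close>

section \<open>Residue classes in intervals\<close>

lemma div_add_minus_div_bounds:
  fixes X n v :: nat
  assumes "0 < v"
  shows "n div v \<le> (X + n) div v - X div v"
    and "(X + n) div v - X div v \<le> (n + v - 1) div v"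
proof -
  have "(X + n) div v = X div v + n div v + (X mod v + n mod v) div v"
    by (rule div_add1_eq)
  then show "n div v \<le> (X + n) div v - X div v" by simp
  have "X + n = X mod v + n + X div v * v" by simp
  then have "(X + n) div v = (X mod v + n + X div v * v) div v" by (rule arg_cong)
  also have "\<dots> = X div v + (X mod v + n) div v"
    using assms by (intro div_mult_self1) simp
  finally have "(X + n) div v = X div v + (X mod v + n) div v" .
  moreover have "X mod v + n \<le> n + v - 1"
    using assms by (simp add: less_Suc_eq_le[symmetric])
  then have "(X mod v + n) div v \<le> (n + v - 1) div v"
    by (rule div_le_mono)
  ultimately show "(X + n) div v - X div v \<le> (n + v - 1) div v" by simp
qed

lemma card_residue_class_below:
  fixes a v N :: nat
  assumes "a < v"
  shows "card {u. u < N \<and> u mod v = a} = (N + v - Suc a) div v"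
proof -
  let ?K = "{..<(N + v - Suc a) div v}"
  have below_iff: "k \<in> ?K \<longleftrightarrow> k * v + a < N" for k
    using assms less_eq_div_iff_mult_less_eq[of v "Suc k" "N + v - Suc a"] by auto
  have "{u. u < N \<and> u mod v = a} = (\<lambda>k. k * v + a) ` ?K"
  proof (intro equalityI subsetI)
    fix u assume u: "u \<in> {u. u < N \<and> u mod v = a}"
    then have "u = u div v * v + a" using div_mult_mod_eq[of u v] by simp
    moreover from this have "u div v \<in> ?K" using u below_iff by simp
    ultimately show "u \<in> (\<lambda>k. k * v + a) ` ?K" by (rule image_eqI)
  next
    fix u assume "u \<in> (\<lambda>k. k * v + a) ` ?K"
    then obtain k where "u = k * v + a" "k \<in> ?K" by blast
    then show "u \<in> {u. u < N \<and> u mod v = a}" using assms below_iff by simp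
  qed
  moreover have "inj_on (\<lambda>k. k * v + a) ?K"
    using assms by (intro inj_onI) simp
  ultimately show ?thesis by (simp add: card_image)
qed

lemma card_residue_class_interval:
  fixes a v L n :: nat
  assumes "a < v"
  shows "n div v \<le> card {u \<in> {L..<L + n}. u mod v = a}"
    and "card {u \<in> {L..<L + n}. u mod v = a} \<le> (n + v - 1) div v"
proof -
  define X where "X = L + v - Suc a"
  have diff: "{u \<in> {L..<L + n}. u mod v = a} =
      {u. u < L + n \<and> u mod v = a} - {u. u < L \<and> u mod v = a}"
    by auto
  have "card {u \<in> {L..<L + n}. u mod v = a} =
      card {u. u < L + n \<and> u mod v = a} - card {u. u < L \<and> u mod v = a}"
    unfolding diff by (rule card_Diff_subset) auto
  also have "\<dots> = (X + n) div v - X div v"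
    using assms unfolding X_def card_residue_class_below[OF assms] by (simp add: algebra_simps)
  finally have card_eq: "card {u \<in> {L..<L + n}. u mod v = a} = (X + n) div v - X div v" .
  show "n div v \<le> card {u \<in> {L..<L + n}. u mod v = a}"
    unfolding card_eq using assms by (intro div_add_minus_div_bounds) simp
  show "card {u \<in> {L..<L + n}. u mod v = a} \<le> (n + v - 1) div v"
    unfolding card_eq using assms by (intro div_add_minus_div_bounds) simp
qed

lemma card_linear_cong_solutions:
  fixes p v g :: nat and c :: int
  assumes "coprime p v" "0 < v"
  shows "g div v \<le> card {d. d < g \<and> [int p * int d = c] (mod int v)}"
    and "card {d. d < g \<and> [int p * int d = c] (mod int v)} \<le> (g + v - 1) div v"
proof -
  have coprime: "coprime (int p) (int v)" using assms(1) by simp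
  then obtain p' where "[int p * p' = 1] (mod int v)" using cong_solve_coprime_int by blast
  then have "[int p * (p' * c) = c] (mod int v)"
    using cong_scalar_right[of "int p * p'" 1 "int v" c] by (simp add: mult.assoc)
  define a where "a = nat ((p' * c) mod int v)"
  have "a < v" using assms(2) by (simp add: a_def nat_less_iff)
  have "[int p * int d = c] (mod int v) \<longleftrightarrow> d mod v = a" for d
  proof -
    have "[int p * int d = c] (mod int v) \<longleftrightarrow> [int p * int d = int p * (p' * c)] (mod int v)"
      using \<open>[int p * (p' * c) = c] (mod int v)\<close> by (meson cong_sym cong_trans)
    also have "\<dots> \<longleftrightarrow> [int d = p' * c] (mod int v)" using coprime by (rule cong_mult_lcancel)
    also have "\<dots> \<longleftrightarrow> [int d = int a] (mod int v)"
      using assms(2) by (simp add: a_def)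
    also have "\<dots> \<longleftrightarrow> d mod v = a"
      using \<open>a < v\<close> by (simp add: cong_int_iff cong_def flip: of_nat_mod)
    finally show ?thesis .
  qed
  then have solutions:
      "{d. d < g \<and> [int p * int d = c] (mod int v)} = {u \<in> {0..<0 + g}. u mod v = a}"
    by auto
  show "g div v \<le> card {d. d < g \<and> [int p * int d = c] (mod int v)}"
    unfolding solutions by (rule card_residue_class_interval(1)[OF \<open>a < v\<close>])
  show "card {d. d < g \<and> [int p * int d = c] (mod int v)} \<le> (g + v - 1) div v"
    unfolding solutions by (rule card_residue_class_interval(2)[OF \<open>a < v\<close>])
qed

lemma mult_div_eq_iff_mem_interval:
  fixes G p u D :: nat
  assumes "0 < G" "0 < p"
  shows "G * u div p = D \<longleftrightarrow> u \<in> {(p * D + G - 1) div G..<(p * D + p + G - 1) div G}"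
proof -
  have ceiling_le_iff: "(x + G - 1) div G \<le> u \<longleftrightarrow> x \<le> G * u" for x
    using div_less_iff_less_mult[OF assms(1), of "x + G - 1" "Suc u"] assms(1)
    by (auto simp: mult.commute)
  have "G * u div p = D \<longleftrightarrow> p * D \<le> G * u \<and> \<not> p * D + p \<le> G * u"
    using less_eq_div_iff_mult_less_eq[OF assms(2), of D "G * u"]
      div_less_iff_less_mult[OF assms(2), of "G * u" "Suc D"]
    by (auto simp: algebra_simps)
  then show ?thesis
    using ceiling_le_iff[of "p * D"] ceiling_le_iff[of "p * D + p"] by auto
qed

lemma card_fibre_residue_class:
  fixes p q r G D a v :: nat
  assumes "p = q * G + r" "r < G" "0 < p" "a < v"
  shows "q div v \<le> card {u. G * u div p = D \<and> u mod v = a}"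
    and "card {u. G * u div p = D \<and> u mod v = a} \<le> (q + v) div v"
proof -
  have "0 < G" using assms(2) by simp
  define Y where "Y = p * D + G - 1"
  define n where "n = (Y + p) div G - Y div G"
  have "Y + p = p * D + p + G - 1" using \<open>0 < G\<close> by (simp add: Y_def)
  moreover have "Y div G \<le> (Y + p) div G" by (rule div_le_mono) simp
  ultimately have fibre:
      "{u. G * u div p = D \<and> u mod v = a} = {u \<in> {Y div G..<Y div G + n}. u mod v = a}"
    using mult_div_eq_iff_mem_interval[OF \<open>0 < G\<close> assms(3)] by (auto simp: Y_def n_def)
  have "q = p div G" using assms(1,2) by simp
  then have "q \<le> n"
    unfolding n_def using div_add_minus_div_bounds(1)[OF \<open>0 < G\<close>, of p Y] by simp
  have "(p + G - 1) div G \<le> q + 1"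
    using assms(1,2) div_less_iff_less_mult[OF \<open>0 < G\<close>, of "p + G - 1" "q + 2"]
    by (simp add: less_Suc_eq_le)
  then have "n \<le> q + 1"
    unfolding n_def using div_add_minus_div_bounds(2)[OF \<open>0 < G\<close>, of Y p] by simp
  have "q div v \<le> n div v" using \<open>q \<le> n\<close> by (rule div_le_mono)
  also have "\<dots> \<le> card {u \<in> {Y div G..<Y div G + n}. u mod v = a}"
    by (rule card_residue_class_interval(1)[OF assms(4)])
  finally show "q div v \<le> card {u. G * u div p = D \<and> u mod v = a}"
    unfolding fibre .
  have "card {u \<in> {Y div G..<Y div G + n}. u mod v = a} \<le> (n + v - 1) div v"
    by (rule card_residue_class_interval(2)[OF assms(4)])
  also have "\<dots> \<le> (q + v) div v" using \<open>n \<le> q + 1\<close> by (intro div_le_mono) simp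
  finally show "card {u. G * u div p = D \<and> u mod v = a} \<le> (q + v) div v"
    unfolding fibre .
qed

section \<open>Runs of the digit walk\<close>

lemma card_less_mult_eq_sum:
  fixes g m :: nat
  shows "card {D. D < g * m \<and> P D} = (\<Sum>d<g. card {D. D < m \<and> P (d * m + D)})"
proof -
  let ?join = "\<lambda>(d, D). d * m + D"
  let ?S = "SIGMA d:{..<g}. {D. D < m \<and> P (d * m + D)}"
  have "{D. D < g * m \<and> P D} = ?join ` ?S"
  proof (intro equalityI subsetI)
    fix D assume D: "D \<in> {D. D < g * m \<and> P D}"
    then have "0 < m" by (cases m) auto
    with D have "D div m < g" "D mod m < m" "P (D div m * m + D mod m)"
      by (auto simp: div_less_iff_less_mult mult.commute)
    then show "D \<in> ?join ` ?S"
      by (intro image_eqI[of _ _ "(D div m, D mod m)"]) auto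
  next
    fix D assume "D \<in> ?join ` ?S"
    then obtain d D' where D: "D = d * m + D'" "d < g" "D' < m" "P D" by auto
    have "d * m + D' < Suc d * m" using D by simp
    also have "\<dots> \<le> g * m" using D by (intro mult_le_mono1) simp
    finally show "D \<in> {D. D < g * m \<and> P D}" using D by simp
  qed
  moreover have "inj_on ?join ?S"
  proof (rule inj_onI, clarify)
    fix d D d' D' assume "D < m" "D' < m" "d * m + D = d' * m + D'"
    then have "(d * m + D) div m = (d' * m + D') div m \<and> (d * m + D) mod m = (d' * m + D') mod m"
      by simp
    then show "d = d' \<and> D = D'" using \<open>D < m\<close> \<open>D' < m\<close> by simp
  qed
  ultimately show ?thesis by (simp add: card_image)
qed

lemma mult_power_add_div_power:
  fixes g d n D k :: nat
  assumes "0 < g" "k \<le> n"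
  shows "(d * g ^ n + D) div g ^ k = d * g ^ (n - k) + D div g ^ k"
proof -
  have "d * g ^ n + D = D + d * g ^ (n - k) * g ^ k"
    using assms(2) by (simp add: power_add[symmetric])
  then show ?thesis using assms(1) by (simp only:) simp
qed

lemma ball_atLeastAtMost_Suc:
  "(\<forall>j\<in>{1..Suc t}. P j) \<longleftrightarrow> P 1 \<and> (\<forall>i\<in>{1..t}. P (Suc i))"
  by (auto simp: Ball_def) (metis One_nat_def Suc_le_D Suc_le_mono le_SucE not0_implies_Suc)

definition stay_digits :: "nat \<Rightarrow> nat \<Rightarrow> nat \<Rightarrow> nat \<Rightarrow> int \<Rightarrow> nat set" where
  "stay_digits p g v b y = {d. d < g \<and> [int g * y - int p * int d = int b] (mod int v)}"

text \<open>D div g^(t+1-j) is the number formed by the first j of the t+1 base-g digits of D, so the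
  j-th term is the j-th point of the walk started at y.\<close>

definition run_digits :: "nat \<Rightarrow> nat \<Rightarrow> nat \<Rightarrow> nat \<Rightarrow> nat \<Rightarrow> int \<Rightarrow> nat set" where
  "run_digits p g v b t y = {D. D < g ^ Suc t \<and>
     (\<forall>j\<in>{1..t}. [int g ^ j * y - int p * int (D div g ^ (Suc t - j)) = int b] (mod int v)) \<and>
     \<not> [int g ^ Suc t * y - int p * int D = int b] (mod int v)}"

lemma card_stay_digits_bounds:
  assumes "coprime p v" "0 < v"
  shows "g div v \<le> card (stay_digits p g v b y)"
    and "card (stay_digits p g v b y) \<le> (g + v - 1) div v"
proof -
  have "[int g * y - int p * int d = int b] (mod int v) \<longleftrightarrow>
      [int p * int d = int g * y - int b] (mod int v)" for d
    by (simp add: cong_iff_dvd_diff dvd_diff_commute algebra_simps)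
  then have "stay_digits p g v b y = {d. d < g \<and> [int p * int d = int g * y - int b] (mod int v)}"
    unfolding stay_digits_def by blast
  then show "g div v \<le> card (stay_digits p g v b y)"
    and "card (stay_digits p g v b y) \<le> (g + v - 1) div v"
    using card_linear_cong_solutions[OF assms] by simp_all
qed

lemma run_digits_less: "D \<in> run_digits p g v b t y \<Longrightarrow> D < g ^ Suc t"
  by (simp add: run_digits_def)

lemma finite_run_digits: "finite (run_digits p g v b t y)"
  by (rule finite_subset[of _ "{..<g ^ Suc t}"]) (auto dest: run_digits_less)

lemma run_digits_0: "run_digits p g v b 0 y = {..<g} - stay_digits p g v b y"
  by (auto simp: run_digits_def stay_digits_def)

lemma mem_run_digits_Suc:
  assumes "0 < g" "D < g ^ Suc t"
  shows "d * g ^ Suc t + D \<in> run_digits p g v b (Suc t) y \<longleftrightarrow>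
    d \<in> stay_digits p g v b y \<and> D \<in> run_digits p g v b t (int g * y - int p * int d)"
proof -
  define z where "z = int g * y - int p * int d"
  have "d * g ^ Suc t + D < g ^ Suc (Suc t) \<longleftrightarrow> d < g"
  proof
    assume "d * g ^ Suc t + D < g ^ Suc (Suc t)"
    then have "d * g ^ Suc t < g * g ^ Suc t" by (simp only: power_Suc[of g "Suc t"])
    then show "d < g" by (rule mult_less_cancel2[THEN iffD1, THEN conjunct2])
  next
    assume "d < g"
    have "d * g ^ Suc t + D < Suc d * g ^ Suc t" using assms(2) by simp
    also have "\<dots> \<le> g * g ^ Suc t" using \<open>d < g\<close> by (intro mult_le_mono1) simp
    finally show "d * g ^ Suc t + D < g ^ Suc (Suc t)" by simp
  qed
  moreover have "int g ^ 1 * y - int p * int ((d * g ^ Suc t + D) div g ^ (Suc (Suc t) - 1)) = z"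
    using mult_power_add_div_power[OF assms(1), of "Suc t" "Suc t" d D] assms(2) by (simp add: z_def)
  moreover have "int g ^ Suc i * y - int p * int ((d * g ^ Suc t + D) div g ^ (Suc (Suc t) - Suc i))
      = int g ^ i * z - int p * int (D div g ^ (Suc t - i))" if "i \<le> t" for i
    using mult_power_add_div_power[OF assms(1), of "Suc t - i" "Suc t" d D] that
    by (simp add: z_def algebra_simps)
  moreover have "int g ^ Suc (Suc t) * y - int p * int (d * g ^ Suc t + D) =
      int g ^ Suc t * z - int p * int D"
    by (simp add: z_def algebra_simps)
  ultimately show ?thesis
    using assms(2) unfolding run_digits_def stay_digits_def ball_atLeastAtMost_Suc z_def[symmetric]
    by auto
qed

lemma card_run_digits_Suc:
  assumes "0 < g"
  shows "card (run_digits p g v b (Suc t) y) =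
    (\<Sum>d\<in>stay_digits p g v b y. card (run_digits p g v b t (int g * y - int p * int d)))"
proof -
  let ?S = "stay_digits p g v b y"
  let ?R = "\<lambda>d. run_digits p g v b t (int g * y - int p * int d)"
  have "card (run_digits p g v b (Suc t) y) =
      card {D. D < g * g ^ Suc t \<and> D \<in> run_digits p g v b (Suc t) y}"
    by (intro arg_cong[where f = card]) (auto dest: run_digits_less)
  also have "\<dots> =
      (\<Sum>d<g. card {D. D < g ^ Suc t \<and> d * g ^ Suc t + D \<in> run_digits p g v b (Suc t) y})"
    by (rule card_less_mult_eq_sum)
  also have "\<dots> = (\<Sum>d<g. card (if d \<in> ?S then ?R d else {}))"
    by (intro sum.cong refl arg_cong[where f = card])
      (auto simp: mem_run_digits_Suc[OF assms] run_digits_less simp del: power_Suc)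
  also have "\<dots> = (\<Sum>d\<in>?S. card (?R d))"
    by (rule sum.mono_neutral_cong_right) (auto simp: stay_digits_def)
  finally show ?thesis .
qed

lemma card_run_digits_bounds:
  assumes "coprime p v" "0 < v" "0 < g"
  shows "(g div v) ^ t * (g - (g + v - 1) div v) \<le> card (run_digits p g v b t y) \<and>
    card (run_digits p g v b t y) \<le> ((g + v - 1) div v) ^ t * (g - g div v)"
proof (induction t arbitrary: y)
  case 0
  have "card (run_digits p g v b 0 y) = g - card (stay_digits p g v b y)"
    unfolding run_digits_0 by (subst card_Diff_subset) (auto simp: stay_digits_def)
  then show ?case using card_stay_digits_bounds[OF assms(1,2), of g b y] by (auto intro: diff_le_mono2)
next
  case (Suc t)
  let ?lo = "(g div v) ^ t * (g - (g + v - 1) div v)"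
  let ?hi = "((g + v - 1) div v) ^ t * (g - g div v)"
  let ?S = "stay_digits p g v b y"
  let ?sum = "\<Sum>d\<in>?S. card (run_digits p g v b t (int g * y - int p * int d))"
  have "(g div v) ^ Suc t * (g - (g + v - 1) div v) = g div v * ?lo" by (simp add: mult.assoc)
  also have "\<dots> \<le> card ?S * ?lo"
    using card_stay_digits_bounds(1)[OF assms(1,2)] by (rule mult_le_mono1)
  also have "\<dots> \<le> ?sum"
    using sum_bounded_below[of ?S ?lo] Suc.IH by simp
  finally have lower: "(g div v) ^ Suc t * (g - (g + v - 1) div v) \<le> ?sum" .
  have "?sum \<le> card ?S * ?hi"
    using sum_bounded_above[of ?S _ ?hi] Suc.IH by simp
  also have "\<dots> \<le> (g + v - 1) div v * ?hi"
    using card_stay_digits_bounds(2)[OF assms(1,2)] by (rule mult_le_mono1)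
  also have "\<dots> = ((g + v - 1) div v) ^ Suc t * (g - g div v)" by (simp add: mult.assoc)
  finally have upper: "?sum \<le> ((g + v - 1) div v) ^ Suc t * (g - g div v)" .
  show ?case
    unfolding card_run_digits_Suc[OF assms(3)] using lower upper by (rule conjI)
qed

section \<open>From powers of a primitive root to the digit walk\<close>

lemma card_filter_primroot_powers:
  fixes m g :: nat
  assumes "1 < m" "residue_primroot m g"
  shows "card {i \<in> {1..totient m}. P (g ^ i mod m)} = card {u \<in> totatives m. P u}"
proof -
  let ?f = "\<lambda>i. g ^ i mod m"
  let ?T = "totient m"
  have generator: "bij_betw ?f {..<?T} (totatives m)"
    by (rule residue_primroot_is_generator[OF assms])
  have "0 < ?T" using assms(1) totient_gt_0_iff[of m] by linarith
  have "ord m g = ?T" using assms(2) by (simp add: residue_primroot_def)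
  then have "?f ?T = ?f 0" using ord_works[of g m] by (simp add: cong_def)
  moreover have "{1..?T} = insert ?T {1..<?T}" "{..<?T} = insert 0 {1..<?T}"
    using \<open>0 < ?T\<close> by (auto simp del: totient_gt_0_iff)
  ultimately have "?f ` {1..?T} = totatives m"
    using generator by (simp add: bij_betw_def)
  moreover from this have "inj_on ?f {1..?T}"
    by (simp add: inj_on_iff_eq_card totient_def)
  ultimately have "bij_betw ?f {1..?T} (totatives m)" by (simp add: bij_betw_def)
  then have "bij_betw ?f {i \<in> {1..?T}. P (?f i)} (?f ` {i \<in> {1..?T}. P (?f i)})"
    by (rule bij_betw_subset) auto
  moreover have "?f ` {i \<in> {1..?T}. P (?f i)} = {u \<in> ?f ` {1..?T}. P u}" by blast
  ultimately show ?thesis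
    using \<open>?f ` {1..?T} = totatives m\<close> by (simp add: bij_betw_same_card)
qed

definition run_after :: "nat \<Rightarrow> nat \<Rightarrow> nat \<Rightarrow> nat \<Rightarrow> nat \<Rightarrow> nat \<Rightarrow> bool" where
  "run_after p g v b t u \<longleftrightarrow>
     \<not> [u = b] (mod v) \<and> (\<forall>j\<in>{1..t}. [g ^ j * u mod p = b] (mod v)) \<and>
     \<not> [g ^ Suc t * u mod p = b] (mod v)"

lemma rho_eq_card_run_after:
  assumes "prime p" "residue_primroot p g" "1 \<le> t"
  shows "rho p g v b t = card {u. u < p \<and> run_after p g v b t u}"
proof -
  have power_mod: "g ^ (i + k) mod p = g ^ k * (g ^ i mod p) mod p" for i k
    by (simp add: power_add mod_mult_right_eq mult.commute)
  have "rho p g v b t = card {i \<in> {1..totient p}. run_after p g v b t (g ^ i mod p)}"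
    unfolding rho_def run_after_def totient_prime[OF assms(1)]
  proof (intro arg_cong[where f = card] Collect_cong)
    fix i
    have "g ^ (i + t + 1) mod p = g ^ Suc t * (g ^ i mod p) mod p"
      using power_mod[of i "Suc t"] by simp
    then show "(i \<in> {1..p - 1} \<and> \<not> [g ^ i mod p = b] (mod v) \<and>
          \<not> [g ^ (i + t + 1) mod p = b] (mod v) \<and> (\<forall>j\<in>{1..t}. [g ^ (i + j) mod p = b] (mod v))) \<longleftrightarrow>
        (i \<in> {1..p - 1} \<and> \<not> [g ^ i mod p = b] (mod v) \<and>
          (\<forall>j\<in>{1..t}. [g ^ j * (g ^ i mod p) mod p = b] (mod v)) \<and>
          \<not> [g ^ Suc t * (g ^ i mod p) mod p = b] (mod v))"
      by (simp only: power_mod[of i]) blast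
  qed
  also have "\<dots> = card {u \<in> totatives p. run_after p g v b t u}"
    using assms(1,2) prime_gt_1_nat by (intro card_filter_primroot_powers) auto
  also have "{u \<in> totatives p. run_after p g v b t u} = {u. u < p \<and> run_after p g v b t u}"
  proof -
    have "\<not> run_after p g v b t 0"
      using assms(3) by (auto simp: run_after_def dest: bspec[of _ _ 1])
    then show ?thesis by (auto simp: totatives_prime[OF assms(1)] intro: gr0I)
  qed
  finally show ?thesis .
qed

lemma mod_cong_iff_digits:
  fixes g u p j n v b :: nat
  assumes "0 < g" "j \<le> n"
  shows "[g ^ j * u mod p = b] (mod v) \<longleftrightarrow>
    [int g ^ j * int (u mod v) - int p * int (g ^ n * u div p div g ^ (n - j)) = int b] (mod int v)"
proof -
  define X where "X = g ^ j * u"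
  have "g ^ n * u = X * g ^ (n - j)"
    using assms(2) by (simp add: X_def power_add[symmetric] ac_simps)
  then have "g ^ n * u div p div g ^ (n - j) = X div p"
    using assms(1) by (simp add: div_mult2_eq[symmetric])
  moreover have "int X = int (X div p) * int p + int (X mod p)"
    by (metis div_mult_mod_eq of_nat_add of_nat_mult)
  then have "int (X mod p) = int g ^ j * int u - int p * int (X div p)"
    by (simp add: X_def algebra_simps)
  moreover have "[int g ^ j * int u - c = int b] (mod int v) \<longleftrightarrow>
      [int g ^ j * int (u mod v) - c = int b] (mod int v)" for c
  proof -
    have "(int g ^ j * int (u mod v) - c) mod int v =
        ((int g ^ j * (int u mod int v)) mod int v - c) mod int v"
      by (simp add: of_nat_mod mod_diff_left_eq)
    also have "\<dots> = (int g ^ j * int u - c) mod int v"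
      by (simp add: mod_mult_right_eq mod_diff_left_eq)
    finally show ?thesis by (simp add: cong_def)
  qed
  ultimately show ?thesis
    unfolding X_def[symmetric] cong_int_iff[symmetric] by simp
qed

lemma run_after_iff_run_digits:
  assumes "0 < g" "b < v" "u < p"
  shows "run_after p g v b t u \<longleftrightarrow>
    u mod v \<noteq> b \<and> g ^ Suc t * u div p \<in> run_digits p g v b t (int (u mod v))"
proof -
  have "g ^ Suc t * u < g ^ Suc t * p" using assms(1,3) by simp
  then have "g ^ Suc t * u div p < g ^ Suc t"
    using assms(3) by (simp add: div_less_iff_less_mult mult.commute)
  moreover have "[u = b] (mod v) \<longleftrightarrow> u mod v = b" using assms(2) by (simp add: cong_def)
  moreover have "[g ^ j * u mod p = b] (mod v) \<longleftrightarrow>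
      [int g ^ j * int (u mod v) - int p * int (g ^ Suc t * u div p div g ^ (Suc t - j)) = int b]
        (mod int v)"
    if "j \<in> {1..t}" for j
    using mod_cong_iff_digits[OF assms(1), of j "Suc t"] that by simp
  moreover have "[g ^ Suc t * u mod p = b] (mod v) \<longleftrightarrow>
      [int g ^ Suc t * int (u mod v) - int p * int (g ^ Suc t * u div p) = int b] (mod int v)"
    using mod_cong_iff_digits[OF assms(1), of "Suc t" "Suc t"] by simp
  ultimately show ?thesis unfolding run_after_def run_digits_def by auto
qed

lemma card_run_after_eq_sum_fibres:
  assumes "0 < g" "b < v" "0 < p"
  shows "card {u. u < p \<and> run_after p g v b t u} =
    (\<Sum>(a, D)\<in>(SIGMA a:{..<v} - {b}. run_digits p g v b t (int a)).
      card {u. g ^ Suc t * u div p = D \<and> u mod v = a})"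
proof -
  let ?G = "g ^ Suc t"
  let ?S = "{u. u < p \<and> run_after p g v b t u}"
  let ?T = "SIGMA a:{..<v} - {b}. run_digits p g v b t (int a)"
  let ?f = "\<lambda>u. (u mod v, ?G * u div p)"
  have "?f ` ?S \<subseteq> ?T" using run_after_iff_run_digits[OF assms(1,2)] assms(2) by auto
  moreover have "finite ?T" by (simp add: finite_run_digits)
  ultimately have "card ?S = (\<Sum>y\<in>?T. card {u \<in> ?S. ?f u = y})"
    using sum.group[of ?S ?T ?f "\<lambda>_. 1 :: nat"] by simp
  also have "\<dots> = (\<Sum>(a, D)\<in>?T. card {u. ?G * u div p = D \<and> u mod v = a})"
  proof (rule sum.cong[OF refl])
    fix y assume "y \<in> ?T"
    then obtain a D where y: "y = (a, D)" and aD: "(a, D) \<in> ?T" by auto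
    have "u < p" if "?G * u div p = D" for u
    proof (rule ccontr)
      assume "\<not> u < p"
      then have "?G * p div p \<le> ?G * u div p" by (intro div_le_mono) simp
      then show False using that aD assms(3) run_digits_less[of D p g v b t "int a"] by simp
    qed
    then have "{u \<in> ?S. ?f u = (a, D)} = {u. ?G * u div p = D \<and> u mod v = a}"
      using aD run_after_iff_run_digits[OF assms(1,2)] by auto
    then show "card {u \<in> ?S. ?f u = y} =
        (case y of (a, D) \<Rightarrow> card {u. ?G * u div p = D \<and> u mod v = a})"
      unfolding y by simp
  qed
  finally show ?thesis .
qed

lemma rho_bounds:
  fixes p g v b t q r :: nat
  assumes "prime p" "residue_primroot p g" "1 \<le> t" "coprime p v" "b < v" "0 < g"
    and "p = q * g ^ Suc t + r" "r < g ^ Suc t"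
  shows "(v - 1) * ((g div v) ^ t * (g - (g + v - 1) div v)) * (q div v) \<le> rho p g v b t"
    and "rho p g v b t \<le> (v - 1) * (((g + v - 1) div v) ^ t * (g - g div v)) * ((q + v) div v)"
proof -
  let ?lo = "(g div v) ^ t * (g - (g + v - 1) div v)"
  let ?hi = "((g + v - 1) div v) ^ t * (g - g div v)"
  let ?A = "{..<v} - {b}"
  let ?T = "SIGMA a:?A. run_digits p g v b t (int a)"
  let ?fibre = "\<lambda>(a, D). card {u. g ^ Suc t * u div p = D \<and> u mod v = a}"
  have "0 < p" "0 < v" using assms(1,5) prime_gt_0_nat by auto
  have rho: "rho p g v b t = (\<Sum>y\<in>?T. ?fibre y)"
    using rho_eq_card_run_after[OF assms(1-3)] card_run_after_eq_sum_fibres[OF assms(6,5) \<open>0 < p\<close>]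
    by simp
  have fibre: "q div v \<le> ?fibre y \<and> ?fibre y \<le> (q + v) div v" if "y \<in> ?T" for y
    using that card_fibre_residue_class[OF assms(7,8) \<open>0 < p\<close>] by auto
  have "card ?T = (\<Sum>a\<in>?A. card (run_digits p g v b t (int a)))"
    by (simp add: finite_run_digits)
  moreover have "card ?A = v - 1" using assms(5) by simp
  ultimately have "(v - 1) * ?lo \<le> card ?T" "card ?T \<le> (v - 1) * ?hi"
    using sum_bounded_below[of ?A ?lo] sum_bounded_above[of ?A _ ?hi]
      card_run_digits_bounds[OF assms(4) \<open>0 < v\<close> assms(6)] by auto
  show "(v - 1) * ?lo * (q div v) \<le> rho p g v b t"
  proof -
    have "(v - 1) * ?lo * (q div v) \<le> card ?T * (q div v)"
      using \<open>(v - 1) * ?lo \<le> card ?T\<close> by (rule mult_le_mono1)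
    also have "\<dots> \<le> rho p g v b t"
      unfolding rho using sum_bounded_below[of ?T "q div v" ?fibre] fibre by simp
    finally show ?thesis .
  qed
  show "rho p g v b t \<le> (v - 1) * ?hi * ((q + v) div v)"
  proof -
    have "rho p g v b t \<le> card ?T * ((q + v) div v)"
      unfolding rho using sum_bounded_above[of ?T ?fibre "(q + v) div v"] fibre by simp
    also have "\<dots> \<le> (v - 1) * ?hi * ((q + v) div v)"
      using \<open>card ?T \<le> (v - 1) * ?hi\<close> by (rule mult_le_mono1)
    finally show ?thesis .
  qed
qed

section \<open>Floors and ceilings\<close>

lemma ceiling_of_nat_divide:
  fixes m n :: nat assumes "0 < n"
  shows "\<lceil>real m / real n\<rceil> = int ((m + n - 1) div n)"
proof -
  define k where "k = (m + n - 1) div n"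
  have "k * n \<le> m + n - 1"
    unfolding k_def by (rule div_times_less_eq_dividend)
  moreover have "m + n - 1 < Suc k * n"
    using assms div_less_iff_less_mult[of n "m + n - 1" "Suc k"] unfolding k_def by simp
  ultimately have "k * n < m + n" "m \<le> k * n"
    using assms by auto
  then have "real k * real n < real m + real n" "real m \<le> real k * real n"
    by (simp_all flip: of_nat_mult of_nat_add)
  then have "real k - 1 < real m / real n" "real m / real n \<le> real k"
    using assms by (simp_all add: field_simps)
  then show ?thesis
    unfolding k_def[symmetric] by (intro ceiling_unique) simp_all
qed

lemma ceiling_of_nat_complement_divide:
  fixes g v :: nat
  assumes "0 < v"
  shows "\<lceil>real ((v - 1) * g) / real v\<rceil> = int (g - g div v)"
proof -
  have complement: "real ((v - 1) * g) / real v = - (real g / real v) + of_int (int g)"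
    using assms by (simp add: of_nat_diff field_simps)
  show ?thesis
    unfolding complement ceiling_add_of_int ceiling_minus floor_divide_of_nat_eq by (simp add: of_nat_diff)
qed

lemma floor_of_nat_complement_divide:
  fixes g v :: nat
  assumes "0 < v"
  shows "\<lfloor>real ((v - 1) * g) / real v\<rfloor> = int (g - (g + v - 1) div v)"
proof -
  have "g \<le> g * v" using assms by simp
  then have "g + v - 1 < Suc g * v" using assms unfolding mult_Suc by linarith
  then have "(g + v - 1) div v \<le> g"
    using div_less_iff_less_mult[OF assms, of "g + v - 1" "Suc g"] by simp
  have complement: "real ((v - 1) * g) / real v = - (real g / real v) + of_int (int g)"
    using assms by (simp add: of_nat_diff field_simps)
  show ?thesis
    unfolding complement floor_add_int[symmetric] floor_minus ceiling_of_nat_divide[OF assms]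
    using \<open>(g + v - 1) div v \<le> g\<close> by (simp add: of_nat_diff)
qed

theorem corollary9:
  fixes p v g t b q r :: nat
  assumes "prime p" and "odd p"
    and "1 < v" and "v < p - 1"
    and "g \<in> {2..p-1}" and "residue_primroot p g"
    and "t \<ge> 1" and "b \<in> {0..v-1}"
    and "p = q * g ^ (t + 1) + r" and "r < g ^ (t + 1)"
  shows "real (v - 1) * real_of_int (\<lfloor>real g / real v\<rfloor> ^ t)
            * real_of_int \<lfloor>real ((v - 1) * g) / real v\<rfloor>
            * real_of_int \<lfloor>real q / real v\<rfloor> \<le> real (rho p g v b t) \<and>
         real (rho p g v b t) \<le> real (v - 1) * real_of_int (\<lceil>real g / real v\<rceil> ^ t)
            * real_of_int \<lceil>real ((v - 1) * g) / real v\<rceil>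
            * real_of_int \<lceil>real (q + 1) / real v\<rceil>"
proof -
  have "0 < v" "0 < g" "b < v" using assms(3,5,8) by auto
  have "coprime p v"
    using assms(1,3,4) by (intro prime_imp_coprime) (auto dest: dvd_imp_le)
  have "p = q * g ^ Suc t + r" "r < g ^ Suc t" using assms(9,10) by simp_all
  note bounds = rho_bounds[OF assms(1,6,7) \<open>coprime p v\<close> \<open>b < v\<close> \<open>0 < g\<close> this]
  show ?thesis
    unfolding floor_of_nat_complement_divide[OF \<open>0 < v\<close>] ceiling_of_nat_complement_divide[OF \<open>0 < v\<close>]
    unfolding floor_divide_of_nat_eq ceiling_of_nat_divide[OF \<open>0 < v\<close>]
    using bounds[THEN of_nat_mono[where 'a = real]] by (simp add: mult.assoc)
qed

end
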